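(* Let $1<p<2$ and let $A,B$ be finite-dimensional Hilbert spaces with orthonormal bases $\{|j\rangle\}$ of $A$ and $\{|k\rangle\}$ of $B$. For a unit vector $|\varphi\rangle=\sum_{j,k}\varphi_{jk}|j\rangle|k\rangle$ put $q_j=\sum_k|\varphi_{jk}|^2$ and $$g_p(|\varphi\rangle)=\frac{1}{1-p}\ln\sum_j q_j^p .$$ Regarding $g_p$ as a function of the real coordinates $(\operatorname{Re}\varphi_{jk},\operatorname{Im}\varphi_{jk})\in\mathbb{R}^{2|A||B|}$, at every unit vector $|\varphi\rangle$ one has $$\nabla g_p\cdot\nabla g_p=\frac{4p^2}{(1-p)^2}\,\frac{\sum_j q_j^{2p-1}}{\left(\sum_j q_j^p\right)^2}\le \frac{4p^2}{(1-p)^2}\,|A|^{p-1}.$$ Consequently $g_p$ is Lipschitz on the unit sphere of $A\otimes B$ (with respect to the Euclidean norm) with constant at most $\frac{2p}{p-1}|A|^{(p-1)/2}$.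
   Context: $|A|$ denotes the dimension of $A$; logarithms are natural. *)

theory Defs
  imports "HOL-Analysis.Analysis"
begin

text \<open>A state of A \<otimes> B is a vector of coefficients indexed by (j,k); the type
  complex ^ ('a \<times> 'b) carries the real Euclidean inner product
  sum of Re(x * cnj y), i.e. the Euclidean structure of R^(2|A||B|).\<close>

definition marg_q :: "complex ^ ('a::finite \<times> 'b::finite) \<Rightarrow> 'a \<Rightarrow> real" where
  "marg_q \<phi> j = (\<Sum>k\<in>UNIV. (cmod (\<phi> $ (j, k)))\<^sup>2)"

definition renyi_g :: "real \<Rightarrow> complex ^ ('a::finite \<times> 'b::finite) \<Rightarrow> real" where
  "renyi_g p \<phi> = 1 / (1 - p) * ln (\<Sum>j\<in>UNIV. marg_q \<phi> j powr p)"

end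

theory Submission
  imports Defs
begin

(* Write q_j = |phi_j|^2 for the squared norm of the j-th block phi_j = (phi_jk)_k of a
   state phi, and S(phi) = sum_j q_j^p, so that g_p = ln S / (1 - p).

   (1) Since dq_j = 2 Re<phi_j, h_j> and t |-> t^p is differentiable at 0 with derivative 0
       for p > 1, g_p is differentiable at every phi <> 0 with gradient
       G = 2p / ((1-p) S) * (q_j^(p-1) phi_jk)_jk, whence
       G.G = 4p^2/(1-p)^2 * sum_j q_j^(2p-1) / S^2.
   (2) On the unit sphere sum_j q_j = 1, so q_j^(2p-1) <= q_j^p, and by convexity of t^p
       (tangent line at 1/|A|) S >= |A|^(1-p); together G.G <= 4p^2/(1-p)^2 |A|^(p-1).
   (3) For the Lipschitz bound write g_p = 2/(1-p) ln sqrt S, where sqrt S is the Euclidean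
       norm of the vector (|phi_j|^p)_j.  As t |-> t^p is p-Lipschitz on [0,1], sqrt S is
       p-Lipschitz on the sphere; as sqrt S >= |A|^((1-p)/2) there, ln is
       |A|^((p-1)/2)-Lipschitz on the relevant range. *)

section \<open>Elementary real inequalities\<close>

lemma powr_above_tangent:
  fixes p c x :: real
  assumes "1 \<le> p" "0 < c" "0 \<le> x"
  shows "p * c powr (p - 1) * (x - c) \<le> x powr p - c powr p"
proof (cases "x = 0")
  case True
  then show ?thesis using assms by (simp add: powr_diff)
next
  case False
  have "((\<lambda>z. z powr p) has_field_derivative p * c powr (p - 1)) (at c within {0<..})"
    using has_real_derivative_powr[OF assms(2)] by (rule has_field_derivative_at_within)
  from convex_on_imp_above_tangent[OF powr_convex[OF assms(1)] _ _ _ this]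
  show ?thesis using assms False by (auto simp: interior_open)
qed

text \<open>A power sum of a probability vector on n points is at least n powr (1 - p):
  sum the tangent inequalities at the uniform point 1/n.\<close>
lemma sum_powr_lower_bound:
  fixes f :: "'a::finite \<Rightarrow> real"
  assumes "1 \<le> p" "\<And>j. 0 \<le> f j" "(\<Sum>j\<in>UNIV. f j) = 1"
  shows "real CARD('a) powr (1 - p) \<le> (\<Sum>j\<in>UNIV. f j powr p)"
proof -
  define n where "n = real CARD('a)"
  define c where "c = 1 / n"
  have "n > 0" "c > 0" unfolding c_def n_def by simp_all
  have "(\<Sum>j\<in>UNIV. c powr p + p * c powr (p - 1) * (f j - c)) \<le> (\<Sum>j\<in>UNIV. f j powr p)"
    using powr_above_tangent[OF assms(1) \<open>c > 0\<close> assms(2)] by (intro sum_mono) (smt (verit))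
  moreover have "(\<Sum>j\<in>UNIV. c powr p + p * c powr (p - 1) * (f j - c))
      = n * c powr p + p * c powr (p - 1) * ((\<Sum>j\<in>UNIV. f j) - n * c)"
    by (simp add: sum.distrib sum_subtractf n_def flip: sum_distrib_left)
  moreover have "n * c = 1" "n * c powr p = n powr (1 - p)"
    unfolding c_def using \<open>n > 0\<close> by (simp_all add: powr_divide powr_diff)
  ultimately show ?thesis using assms(3) unfolding n_def by simp
qed

lemma powr_lipschitz_unit_interval:
  fixes p x y :: real
  assumes "1 \<le> p" "0 \<le> x" "x \<le> 1" "0 \<le> y" "y \<le> 1"
  shows "\<bar>x powr p - y powr p\<bar> \<le> p * \<bar>x - y\<bar>"
proof -
  have ordered: "b powr p - a powr p \<le> p * (b - a) \<and> a powr p \<le> b powr p"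
    if "0 \<le> a" "a \<le> b" "b \<le> 1" for a b :: real
  proof (cases "b = 0")
    case True
    then show ?thesis using that by simp
  next
    case False
    then have "b > 0" using that by simp
    have "b powr (p - 1) \<le> 1"
      using that \<open>b > 0\<close> assms(1) by (simp add: powr_le1)
    then have "p * b powr (p - 1) * (b - a) \<le> p * (b - a)"
      using that assms(1) by (simp add: mult.assoc mult_left_le_one_le mult_left_mono)
    moreover have "p * b powr (p - 1) * (a - b) \<le> a powr p - b powr p"
      by (rule powr_above_tangent[OF assms(1) \<open>b > 0\<close> that(1)])
    moreover have "a powr p \<le> b powr p" using that assms(1) by (intro powr_mono2) auto
    ultimately show ?thesis by (simp add: algebra_simps)
  qed
  show ?thesis
    using ordered[of x y] ordered[of y x] assms by (cases "x \<le> y") auto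
qed

lemma ln_lipschitz_above:
  fixes m s t :: real
  assumes "0 < m" "m \<le> s" "m \<le> t"
  shows "\<bar>ln s - ln t\<bar> \<le> \<bar>s - t\<bar> / m"
proof -
  have ordered: "ln a - ln b \<le> (a - b) / m" if "m \<le> a" "m \<le> b" "b \<le> a" for a b
  proof -
    have "ln a - ln b = ln (a / b)" using that assms by (simp add: ln_div)
    also have "\<dots> \<le> a / b - 1" using that assms by (intro ln_le_minus_one) simp
    also have "\<dots> = (a - b) / b" using that assms by (simp add: field_simps)
    also have "\<dots> \<le> (a - b) / m" using that assms by (intro divide_left_mono) auto
    finally show ?thesis .
  qed
  show ?thesis
    using ordered[of s t] ordered[of t s] assms by (cases "t \<le> s") auto
qed

lemma L2_set_reverse_triangle:
  "\<bar>L2_set u A - L2_set v A\<bar> \<le> L2_set (\<lambda>j. \<bar>u j - v j\<bar>) A"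
proof -
  have "L2_set (\<lambda>j. \<bar>u j - v j\<bar>) A = L2_set (\<lambda>j. u j - v j) A"
       "L2_set (\<lambda>j. \<bar>u j - v j\<bar>) A = L2_set (\<lambda>j. v j - u j) A"
    unfolding L2_set_def by (simp_all add: power2_commute)
  then show ?thesis
    using L2_set_triangle_ineq[of "\<lambda>j. u j - v j" v A] L2_set_triangle_ineq[of "\<lambda>j. v j - u j" u A]
    by simp
qed

lemma powr_square_sqrt:
  fixes q :: real
  assumes "0 \<le> q"
  shows "q powr p = (sqrt q powr p)\<^sup>2"
  using assms by (cases "q = 0")
    (simp_all add: powr_powr power2_eq_square flip: powr_half_sqrt powr_add)

lemma powr_square_times:
  fixes q :: real
  assumes "0 \<le> q"
  shows "(q powr (p - 1))\<^sup>2 * q = q powr (2 * p - 1)"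
proof (cases "q = 0")
  case False
  have "q powr (2 * p - 1) = q powr ((p - 1) + (p - 1) + 1)"
    by (simp add: algebra_simps)
  also have "\<dots> = q powr (p - 1) * q powr (p - 1) * q"
    unfolding powr_add using False assms by simp
  finally show ?thesis by (simp add: power2_eq_square)
qed simp

section \<open>Block structure of bipartite states\<close>

definition block :: "complex ^ ('a::finite \<times> 'b::finite) \<Rightarrow> 'a \<Rightarrow> complex ^ 'b" where
  "block \<phi> j = (\<chi> k. \<phi> $ (j, k))"

definition power_sum :: "real \<Rightarrow> complex ^ ('a::finite \<times> 'b::finite) \<Rightarrow> real" where
  "power_sum p \<phi> = (\<Sum>j\<in>UNIV. marg_q \<phi> j powr p)"

lemma sum_UNIV_pair:
  "(\<Sum>i\<in>(UNIV::('a::finite \<times> 'b::finite) set). f i) = (\<Sum>j\<in>UNIV. \<Sum>k\<in>UNIV. f (j, k))"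
  by (simp add: sum.cartesian_product flip: UNIV_Times_UNIV)

lemma marg_q_block: "marg_q \<phi> j = (norm (block \<phi> j))\<^sup>2"
  unfolding marg_q_def norm_vec_def L2_set_def block_def by (simp add: sum_nonneg)

lemma marg_q_nonneg: "0 \<le> marg_q \<phi> j"
  by (simp add: marg_q_block)

lemma norm_block_diff: "norm (\<phi> - \<psi>) = L2_set (\<lambda>j. norm (block \<phi> j - block \<psi> j)) UNIV"
  unfolding norm_vec_def L2_set_def block_def by (simp add: sum_nonneg sum_UNIV_pair)

lemma sum_marg_q: "(\<Sum>j\<in>UNIV. marg_q \<phi> j) = (norm \<phi>)\<^sup>2"
  unfolding norm_vec_def L2_set_def marg_q_def by (simp add: sum_nonneg sum_UNIV_pair)

lemma marg_q_le_sum: "marg_q \<phi> j \<le> (norm \<phi>)\<^sup>2"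
  unfolding sum_marg_q[symmetric] by (rule member_le_sum) (auto simp: marg_q_nonneg)

lemma marg_q_le_one: "norm \<phi> = 1 \<Longrightarrow> marg_q \<phi> j \<le> 1"
  using marg_q_le_sum[of \<phi> j] by simp

text \<open>On the unit sphere S \<ge> |A|^(1-p), the value at the maximally mixed marginal.\<close>
lemma power_sum_lower_bound:
  fixes \<phi> :: "complex ^ ('a::finite \<times> 'b::finite)"
  assumes "norm \<phi> = 1" "1 \<le> p"
  shows "real CARD('a) powr (1 - p) \<le> power_sum p \<phi>"
  unfolding power_sum_def
  using sum_powr_lower_bound[OF assms(2) marg_q_nonneg] sum_marg_q[of \<phi>] assms(1) by simp

lemma power_sum_pos:
  assumes "\<phi> \<noteq> 0"
  shows "0 < power_sum p \<phi>"
proof -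
  have "0 < (\<Sum>j\<in>UNIV. marg_q \<phi> j)" using assms by (simp add: sum_marg_q)
  then obtain j where "marg_q \<phi> j \<noteq> 0"
    using sum.neutral[of UNIV "marg_q \<phi>"] by force
  then have "0 < marg_q \<phi> j powr p" using marg_q_nonneg[of \<phi> j] by simp
  then show ?thesis
    unfolding power_sum_def by (intro sum_pos2[of UNIV j]) auto
qed

section \<open>The gradient of g_p\<close>

lemma has_derivative_vec_component [derivative_intros]:
  "((\<lambda>x. x $ i) has_derivative (\<lambda>h. h $ i)) F"
  by (rule bounded_linear_imp_has_derivative[OF bounded_linear_vec_nth])

lemma marg_q_has_derivative:
  "((\<lambda>\<psi>. marg_q \<psi> j) has_derivative (\<lambda>h. 2 * (block \<phi> j \<bullet> block h j))) (at \<phi>)"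
proof -
  have marg: "(\<lambda>\<psi>. marg_q \<psi> j) = (\<lambda>\<psi>. \<Sum>k\<in>UNIV. \<psi> $ (j, k) \<bullet> \<psi> $ (j, k))"
    unfolding marg_q_def by (simp add: power2_norm_eq_inner)
  have diff: "(\<lambda>h. 2 * (block \<phi> j \<bullet> block h j)) = (\<lambda>h. \<Sum>k\<in>UNIV. 2 * (\<phi> $ (j, k) \<bullet> h $ (j, k)))"
    unfolding block_def inner_vec_def by (simp add: sum_distrib_left)
  show ?thesis
    unfolding marg diff by (auto intro!: derivative_eq_intros simp: inner_commute)
qed

text \<open>Where the j-th block vanishes, q_j powr p is flat to first order: it is bounded
  by norm h powr (2p), which is o(norm h) since p > 1.\<close>
lemma powr_marg_q_has_derivative_zero:
  fixes \<phi> :: "complex ^ ('a::finite \<times> 'b::finite)"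
  assumes "1 < p" "marg_q \<phi> j = 0"
  shows "((\<lambda>\<psi>. marg_q \<psi> j powr p) has_derivative (\<lambda>h. 0)) (at \<phi>)"
proof -
  have "\<phi> $ (j, k) = 0" for k
    using assms(2) unfolding marg_q_def by (simp add: sum_nonneg_eq_0_iff)
  then have shift: "marg_q (\<phi> + h) j = marg_q h j" for h
    unfolding marg_q_def by simp
  have small: "marg_q h j powr p / norm h \<le> norm h powr (2 * p - 1)" if "h \<noteq> 0" for h
  proof -
    have "marg_q h j powr p \<le> ((norm h)\<^sup>2) powr p"
      using assms by (intro powr_mono2) (auto simp: marg_q_nonneg marg_q_le_sum)
    also have "\<dots> = norm h powr (2 * p - 1) * norm h"
      using that by (simp add: powr_powr powr_diff flip: powr_numeral)
    finally show ?thesis using that by (simp add: divide_le_eq)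
  qed
  have "((\<lambda>h. norm h powr (2 * p - 1)) \<longlongrightarrow> 0) (at (0 :: complex ^ ('a \<times> 'b)))"
    by (rule tendsto_zero_powrI) (use assms in \<open>auto intro!: tendsto_eq_intros\<close>)
  then have "((\<lambda>h. marg_q h j powr p / norm h) \<longlongrightarrow> 0) (at (0 :: complex ^ ('a \<times> 'b)))"
    by (rule tendsto_sandwich[rotated 2, OF tendsto_const])
       (use small in \<open>auto simp: eventually_at_filter intro!: always_eventually\<close>)
  then show ?thesis
    unfolding has_derivative_at using assms by (simp add: shift)
qed

text \<open>Chain rule for q_j powr p, valid also where q_j = 0 because p > 1.\<close>
lemma powr_marg_q_has_derivative:
  fixes \<phi> :: "complex ^ ('a::finite \<times> 'b::finite)"
  assumes "1 < p"
  shows "((\<lambda>\<psi>. marg_q \<psi> j powr p) has_derivative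
           (\<lambda>h. p * marg_q \<phi> j powr (p - 1) * (2 * (block \<phi> j \<bullet> block h j)))) (at \<phi>)"
proof (cases "marg_q \<phi> j = 0")
  case True
  then show ?thesis using powr_marg_q_has_derivative_zero[OF assms True] by simp
next
  case False
  then have "marg_q \<phi> j > 0" using marg_q_nonneg[of \<phi> j] by simp
  then show ?thesis
    by (rule has_derivative_eq_rhs[OF has_derivative_powr[OF marg_q_has_derivative has_derivative_const]])
       (use \<open>marg_q \<phi> j > 0\<close> in \<open>auto simp: powr_diff field_simps\<close>)
qed

definition renyi_grad :: "real \<Rightarrow> complex ^ ('a::finite \<times> 'b::finite) \<Rightarrow> complex ^ ('a \<times> 'b)" where
  "renyi_grad p \<phi> =
     (\<chi> i. (2 * p / ((1 - p) * power_sum p \<phi>) * marg_q \<phi> (fst i) powr (p - 1)) *\<^sub>R \<phi> $ i)"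

lemma renyi_grad_inner:
  "renyi_grad p \<phi> \<bullet> h =
     2 * p / ((1 - p) * power_sum p \<phi>) * (\<Sum>j\<in>UNIV. marg_q \<phi> j powr (p - 1) * (block \<phi> j \<bullet> block h j))"
  unfolding renyi_grad_def inner_vec_def block_def
  by (simp add: sum_UNIV_pair sum_distrib_left mult.assoc)

lemma renyi_g_has_derivative:
  fixes \<phi> :: "complex ^ ('a::finite \<times> 'b::finite)"
  assumes "1 < p" "\<phi> \<noteq> 0"
  shows "(renyi_g p has_derivative (\<lambda>h. renyi_grad p \<phi> \<bullet> h)) (at \<phi>)"
proof -
  let ?dS = "\<lambda>h. \<Sum>j\<in>UNIV. p * marg_q \<phi> j powr (p - 1) * (2 * (block \<phi> j \<bullet> block h j))"
  have "(power_sum p has_derivative ?dS) (at \<phi>)"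
    unfolding power_sum_def[abs_def]
    by (rule has_derivative_sum) (rule powr_marg_q_has_derivative[OF assms(1)])
  from has_derivative_mult_right[OF has_derivative_ln[OF power_sum_pos[OF assms(2)] this]]
  have deriv: "((\<lambda>\<psi>. 1 / (1 - p) * ln (power_sum p \<psi>)) has_derivative
          (\<lambda>h. 1 / (1 - p) * (?dS h * inverse (power_sum p \<phi>)))) (at \<phi>)" .
  have g_eq: "renyi_g p = (\<lambda>\<psi>. 1 / (1 - p) * ln (power_sum p \<psi>))"
    by (simp add: renyi_g_def power_sum_def fun_eq_iff)
  have "1 / (1 - p) * (?dS h * inverse (power_sum p \<phi>)) = renyi_grad p \<phi> \<bullet> h" for h
    using assms(1) by (simp add: renyi_grad_inner sum_distrib_left field_simps)
  then show ?thesis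
    unfolding g_eq by (intro has_derivative_eq_rhs[OF deriv]) auto
qed

text \<open>Squared length of G; this identity needs no hypotheses (division by zero is 0).\<close>
lemma renyi_grad_inner_self:
  "renyi_grad p \<phi> \<bullet> renyi_grad p \<phi> =
     4 * p\<^sup>2 / (1 - p)\<^sup>2 * ((\<Sum>j\<in>UNIV. marg_q \<phi> j powr (2 * p - 1)) / (power_sum p \<phi>)\<^sup>2)"
proof -
  define c where "c = 2 * p / ((1 - p) * power_sum p \<phi>)"
  have "renyi_grad p \<phi> \<bullet> renyi_grad p \<phi> =
      c * (\<Sum>j\<in>UNIV. marg_q \<phi> j powr (p - 1) * (c * marg_q \<phi> j powr (p - 1) * marg_q \<phi> j))"
    unfolding renyi_grad_inner c_def[symmetric]
    by (simp add: renyi_grad_def block_def c_def marg_q_block power2_norm_eq_inner inner_vec_def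
        sum_distrib_left mult.assoc)
  also have "\<dots> = (\<Sum>j\<in>UNIV. c\<^sup>2 * ((marg_q \<phi> j powr (p - 1))\<^sup>2 * marg_q \<phi> j))"
    by (simp add: sum_distrib_left power2_eq_square mult_ac)
  also have "\<dots> = c\<^sup>2 * (\<Sum>j\<in>UNIV. marg_q \<phi> j powr (2 * p - 1))"
    by (simp add: powr_square_times marg_q_nonneg sum_distrib_left)
  finally show ?thesis
    unfolding c_def by (simp add: power_divide power_mult_distrib)
qed

text \<open>Part (2): on the unit sphere, sum_j q_j^(2p-1) \<le> S and S \<ge> |A|^(1-p), so the
  gradient has squared length at most 4p^2/(1-p)^2 |A|^(p-1).\<close>
lemma renyi_grad_bound:
  fixes \<phi> :: "complex ^ ('a::finite \<times> 'b::finite)"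
  assumes "1 \<le> p" "norm \<phi> = 1"
  shows "4 * p\<^sup>2 / (1 - p)\<^sup>2 * ((\<Sum>j\<in>UNIV. marg_q \<phi> j powr (2 * p - 1)) / (power_sum p \<phi>)\<^sup>2)
         \<le> 4 * p\<^sup>2 / (1 - p)\<^sup>2 * real CARD('a) powr (p - 1)"
proof (rule mult_left_mono)
  define S where "S = power_sum p \<phi>"
  define n where "n = real CARD('a)"
  have "n > 0" unfolding n_def by simp
  have S_lower: "n powr (1 - p) \<le> S"
    unfolding S_def n_def by (rule power_sum_lower_bound[OF assms(2,1)])
  then have "S > 0" using \<open>n > 0\<close> by (smt (verit) powr_gt_zero)
  have "marg_q \<phi> j powr (2 * p - 1) \<le> marg_q \<phi> j powr p" for j
    using assms marg_q_le_one[OF assms(2), of j] marg_q_nonneg[of \<phi> j] by (intro powr_mono') auto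
  then have sum_le_S: "(\<Sum>j\<in>UNIV. marg_q \<phi> j powr (2 * p - 1)) \<le> S"
    unfolding S_def power_sum_def by (rule sum_mono)
  have "1 = n powr (p - 1) * n powr (1 - p)" using \<open>n > 0\<close> by (simp flip: powr_add)
  also have "\<dots> \<le> n powr (p - 1) * S" using S_lower by (intro mult_left_mono) auto
  finally have "S \<le> n powr (p - 1) * S\<^sup>2"
    using \<open>S > 0\<close> by (simp add: power2_eq_square)
  with sum_le_S \<open>S > 0\<close>
  show "(\<Sum>j\<in>UNIV. marg_q \<phi> j powr (2 * p - 1)) / (power_sum p \<phi>)\<^sup>2 \<le> real CARD('a) powr (p - 1)"
    unfolding S_def[symmetric] n_def[symmetric] by (simp add: divide_le_eq)
qed simp

section \<open>The Lipschitz bound\<close>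

lemma sqrt_power_sum:
  "sqrt (power_sum p \<phi>) = L2_set (\<lambda>j. norm (block \<phi> j) powr p) UNIV"
  unfolding L2_set_def power_sum_def
  by (simp add: marg_q_block powr_square_sqrt[of "(norm (block \<phi> j))\<^sup>2" p for j])

text \<open>sqrt S is p-Lipschitz on the unit sphere, since each |phi_j|^p is.\<close>
lemma sqrt_power_sum_lipschitz:
  fixes \<phi> \<psi> :: "complex ^ ('a::finite \<times> 'b::finite)"
  assumes "1 \<le> p" "norm \<phi> = 1" "norm \<psi> = 1"
  shows "\<bar>sqrt (power_sum p \<phi>) - sqrt (power_sum p \<psi>)\<bar> \<le> p * norm (\<phi> - \<psi>)"
proof -
  have block_le_one: "norm (block x j) \<le> 1" if "norm x = 1" for x :: "complex ^ ('a \<times> 'b)" and j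
    using marg_q_le_one[OF that, of j] by (simp add: marg_q_block power_le_one_iff)
  have block_lip: "\<bar>norm (block \<phi> j) powr p - norm (block \<psi> j) powr p\<bar> \<le> p * norm (block \<phi> j - block \<psi> j)"
    for j
  proof -
    have "\<bar>norm (block \<phi> j) powr p - norm (block \<psi> j) powr p\<bar> \<le> p * \<bar>norm (block \<phi> j) - norm (block \<psi> j)\<bar>"
      using assms block_le_one by (intro powr_lipschitz_unit_interval) auto
    also have "\<dots> \<le> p * norm (block \<phi> j - block \<psi> j)"
      using assms norm_triangle_ineq3 by (intro mult_left_mono) auto
    finally show ?thesis .
  qed
  have "\<bar>sqrt (power_sum p \<phi>) - sqrt (power_sum p \<psi>)\<bar> \<le>
        L2_set (\<lambda>j. \<bar>norm (block \<phi> j) powr p - norm (block \<psi> j) powr p\<bar>) UNIV"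
    unfolding sqrt_power_sum by (rule L2_set_reverse_triangle)
  also have "\<dots> \<le> L2_set (\<lambda>j. p * norm (block \<phi> j - block \<psi> j)) UNIV"
    by (rule L2_set_mono) (use block_lip in auto)
  also have "\<dots> = p * norm (\<phi> - \<psi>)"
    using assms by (simp add: norm_block_diff L2_set_right_distrib)
  finally show ?thesis .
qed

text \<open>Part (3): g_p = 2/(1-p) ln sqrt S, with sqrt S p-Lipschitz and bounded below by
  |A|^((1-p)/2) on the sphere.\<close>
lemma renyi_g_lipschitz:
  assumes "1 < p"
  shows "(2 * p / (p - 1) * real CARD('a) powr ((p - 1) / 2))-lipschitz_on
           {\<phi> :: complex ^ ('a::finite \<times> 'b::finite). norm \<phi> = 1} (renyi_g p)"
proof (rule lipschitz_onI)
  define n where "n = real CARD('a)"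
  define m where "m = n powr ((1 - p) / 2)"
  have "n > 0" "m > 0" unfolding m_def n_def by simp_all
  have "- ((1 - p) / 2) = (p - 1) / 2" by (simp add: field_simps)
  then have inv_m: "1 / m = n powr ((p - 1) / 2)"
    unfolding m_def by (metis powr_minus_divide)
  fix \<phi> \<psi> :: "complex ^ ('a \<times> 'b)"
  assume "\<phi> \<in> {\<phi>. norm \<phi> = 1}" "\<psi> \<in> {\<phi>. norm \<phi> = 1}"
  then have unit: "norm \<phi> = 1" "norm \<psi> = 1" by auto
  let ?r = "\<lambda>x. sqrt (power_sum p x)"
  have r_lower: "m \<le> ?r x" if "norm x = 1" for x :: "complex ^ ('a \<times> 'b)"
    using power_sum_lower_bound[OF that, of p] assms \<open>n > 0\<close>
    unfolding m_def n_def by (simp add: powr_half_sqrt_powr)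
  have g_eq: "renyi_g p x = 2 / (1 - p) * ln (?r x)" if "norm x = 1" for x :: "complex ^ ('a \<times> 'b)"
  proof -
    have "power_sum p x > 0" using that by (intro power_sum_pos) auto
    then show ?thesis unfolding renyi_g_def power_sum_def using assms by (simp add: ln_sqrt field_simps)
  qed
  have "\<bar>ln (?r \<phi>) - ln (?r \<psi>)\<bar> \<le> \<bar>?r \<phi> - ?r \<psi>\<bar> / m"
    by (rule ln_lipschitz_above[OF \<open>m > 0\<close> r_lower[OF unit(1)] r_lower[OF unit(2)]])
  also have "\<dots> \<le> p * norm (\<phi> - \<psi>) / m"
    using sqrt_power_sum_lipschitz[OF _ unit] assms \<open>m > 0\<close> by (simp add: divide_right_mono)
  finally have ln_lip: "\<bar>ln (?r \<phi>) - ln (?r \<psi>)\<bar> \<le> p * norm (\<phi> - \<psi>) * n powr ((p - 1) / 2)"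
    by (metis inv_m times_divide_eq_right mult_1_right)
  have "dist (renyi_g p \<phi>) (renyi_g p \<psi>) = 2 / (p - 1) * \<bar>ln (?r \<phi>) - ln (?r \<psi>)\<bar>"
  proof -
    have "renyi_g p \<phi> - renyi_g p \<psi> = 2 / (1 - p) * (ln (?r \<phi>) - ln (?r \<psi>))"
      by (simp add: g_eq unit right_diff_distrib)
    moreover have "\<bar>2 / (1 - p)\<bar> = 2 / (p - 1)" using assms by (simp add: abs_div)
    ultimately show ?thesis unfolding dist_real_def by (simp only: abs_mult)
  qed
  also have "\<dots> \<le> 2 / (p - 1) * (p * norm (\<phi> - \<psi>) * n powr ((p - 1) / 2))"
    using assms ln_lip by (intro mult_left_mono) auto
  finally show "dist (renyi_g p \<phi>) (renyi_g p \<psi>)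
      \<le> 2 * p / (p - 1) * real CARD('a) powr ((p - 1) / 2) * dist \<phi> \<psi>"
    by (simp add: n_def dist_norm mult_ac)
qed (use assms in simp)

text \<open>The gradient is G = renyi_grad p phi.\<close>
theorem mainTheorem2:
  fixes p :: real
  assumes "1 < p" and "p < 2"
  shows "(\<forall>\<phi> :: complex ^ ('a::finite \<times> 'b::finite). norm \<phi> = 1 \<longrightarrow>
            (\<exists>G. (renyi_g p has_derivative (\<lambda>h. G \<bullet> h)) (at \<phi>) \<and>
                 G \<bullet> G = 4 * p\<^sup>2 / (1 - p)\<^sup>2 *
                   ((\<Sum>j\<in>UNIV. marg_q \<phi> j powr (2 * p - 1)) /
                    (\<Sum>j\<in>UNIV. marg_q \<phi> j powr p)\<^sup>2) \<and>
                 4 * p\<^sup>2 / (1 - p)\<^sup>2 *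
                   ((\<Sum>j\<in>UNIV. marg_q \<phi> j powr (2 * p - 1)) /
                    (\<Sum>j\<in>UNIV. marg_q \<phi> j powr p)\<^sup>2)
                   \<le> 4 * p\<^sup>2 / (1 - p)\<^sup>2 * real CARD('a) powr (p - 1)))
         \<and> (\<exists>C. C \<le> 2 * p / (p - 1) * real CARD('a) powr ((p - 1) / 2) \<and>
              C-lipschitz_on {\<phi> :: complex ^ ('a \<times> 'b). norm \<phi> = 1} (renyi_g p))"
proof -
  have gradient: "(renyi_g p has_derivative (\<lambda>h. renyi_grad p \<phi> \<bullet> h)) (at \<phi>)"
    if "norm \<phi> = 1" for \<phi> :: "complex ^ ('a \<times> 'b)"
    using that by (intro renyi_g_has_derivative[OF assms(1)]) auto
  show ?thesis
    using gradient renyi_grad_inner_self renyi_grad_bound[of p] assms(1)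
      renyi_g_lipschitz[OF assms(1)]
    unfolding power_sum_def by fastforce
qed

end
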